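(* Let $G$ be a nice graph that is not algebraic $(1,5)$-choosable, such that every nice graph with fewer vertices than $G$ is algebraic $(1,5)$-choosable. Then (1) $G$ has no vertex of degree $1$ adjacent to a vertex of degree $2$; and (2) $G$ has no two adjacent vertices both of degree $2$.
   Context: All graphs are finite and simple with vertex set $\{1,\dots,n\}$; an edge is a $2$-subset of the vertex set; $E(i)$ is the set of edges incident to $i$. An edge is isolated if both its ends have degree $1$; a graph is nice if it has no isolated edges. For a graph $H=(V,E)$, $P_H=\prod_{\{i,j\}\in E,\ i<j}(\sum_{e\in E(i)}x_e-\sum_{e\in E(j)}x_e)$ in variables $x_e$ (empty product $=1$); for $K:E\to\mathbb{N}$, $x^K=\prod_ex_e^{K(e)}$. $H$ is algebraic $(1,b)$-choosable if there is $K:E\to\mathbb{N}$ with $\sum_eK(e)=|E|$, $K(e)\le b-1$ for all $e$, and the coefficient of $x^K$ in $P_H$ nonzero. *)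

theory Defs
  imports Main "HOL-Library.Poly_Mapping"
begin

definition graph :: "nat \<Rightarrow> nat set set \<Rightarrow> bool" where
  "graph n E \<longleftrightarrow> (\<forall>e\<in>E. e \<subseteq> {1..n} \<and> card e = 2)"

definition inc_edges :: "nat set set \<Rightarrow> nat \<Rightarrow> nat set set" where
  "inc_edges E i = {e\<in>E. i \<in> e}"

definition deg :: "nat set set \<Rightarrow> nat \<Rightarrow> nat" where
  "deg E i = card (inc_edges E i)"

definition nice :: "nat set set \<Rightarrow> bool" where
  "nice E \<longleftrightarrow> \<not> (\<exists>i j. {i, j} \<in> E \<and> i \<noteq> j \<and> deg E i = 1 \<and> deg E j = 1)"

text \<open>Multivariate integer polynomials in variables indexed by edges:
  monomials are finitely supported exponent maps.\<close>
type_synonym mpoly = "(nat set \<Rightarrow>\<^sub>0 nat) \<Rightarrow>\<^sub>0 int"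

definition var :: "nat set \<Rightarrow> mpoly" where
  "var e = Poly_Mapping.single (Poly_Mapping.single e 1) 1"

definition P_graph :: "nat set set \<Rightarrow> mpoly" where
  "P_graph E = (\<Prod>e\<in>E. (\<Sum>f\<in>inc_edges E (Min e). var f) - (\<Sum>f\<in>inc_edges E (Max e). var f))"

definition monom_of :: "nat set set \<Rightarrow> (nat set \<Rightarrow> nat) \<Rightarrow> (nat set \<Rightarrow>\<^sub>0 nat)" where
  "monom_of E K = Abs_poly_mapping (\<lambda>e. if e \<in> E then K e else 0)"

definition alg_1b_choosable :: "nat set set \<Rightarrow> nat \<Rightarrow> bool" where
  "alg_1b_choosable E b \<longleftrightarrow>
     (\<exists>K :: nat set \<Rightarrow> nat. (\<Sum>e\<in>E. K e) = card E \<and> (\<forall>e\<in>E. K e \<le> b - 1) \<and>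
        Poly_Mapping.lookup (P_graph E) (monom_of E K) \<noteq> 0)"

end

(*
  Removing the edges D of a vertex set from a minimal counterexample leaves a nice graph or
  creates an isolated edge. In the first case minimality provides a good monomial x^m' for
  E - D, and it extends to the good monomial x^(mD + m') for E as soon as the coefficient of
  x^(mD + m') in P_E is, up to sign, that of x^m' in P_(E - D). Such coefficients are computed by
  setting variables absent from the monomial to zero: the factors of the edges outside D then
  become P_(E - D), and the factors of D collapse to a few monomials.

  For a leaf u at the degree-2 vertex v (neighbour w) the monomial x_vw x_uv works; for adjacent
  degree-2 vertices u, v with further neighbours a, c it is x_ua x_uv^2. If deleting u and v
  leaves an isolated edge, that edge sits at w (resp. at a or c), and the component of u is a
  path on four vertices (x_vw^2 x_uv), a 4-cycle or a triangle with a pendant edge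
  (x_ua^2 x_uv^2), whose removal keeps the graph nice; the only remaining case is a leaf at a
  degree-2 vertex, excluded by the first part.
*)
theory Submission
  imports Defs
begin

notation Poly_Mapping.keys ("keys")
notation Poly_Mapping.lookup ("lookup")

definition equal_up_to_sign :: "'a::uminus \<Rightarrow> 'a \<Rightarrow> bool" where
  "equal_up_to_sign x y \<longleftrightarrow> x = y \<or> x = - y"

lemma equal_up_to_sign_refl [simp]: "equal_up_to_sign x x"
  by (simp add: equal_up_to_sign_def)

lemma equal_up_to_sign_minus_right [simp]:
  "equal_up_to_sign x (- y) \<longleftrightarrow> equal_up_to_sign x (y :: 'a::group_add)"
  by (auto simp: equal_up_to_sign_def)

lemma equal_up_to_sign_mult:
  "equal_up_to_sign a x \<Longrightarrow> equal_up_to_sign b y \<Longrightarrow> equal_up_to_sign (a * b) (x * (y :: 'a::ring_1))"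
  by (auto simp: equal_up_to_sign_def)

lemma equal_up_to_sign_lookup:
  "equal_up_to_sign p q \<Longrightarrow> equal_up_to_sign (lookup p m) (lookup q m)"
  by (auto simp: equal_up_to_sign_def)

section \<open>Substituting zero for variables\<close>

lemma frag_extend_mult:
  fixes h :: "'a::monoid_add \<Rightarrow> 'b::monoid_add \<Rightarrow>\<^sub>0 int"
  assumes h: "\<And>x y. h (x + y) = h x * h y"
  shows "frag_extend h (p * q) = frag_extend h p * frag_extend h q"
proof -
  have single_left: "frag_extend h (frag_of x * q) = h x * frag_extend h q" for x
  proof -
    have "keys q \<subseteq> UNIV" by simp
    then show ?thesis
      by (induction q rule: frag_induction) (simp_all add: mult_single h right_diff_distrib frag_extend_diff)
  qed
  have "keys p \<subseteq> UNIV" by simp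
  then show ?thesis
    by (induction p rule: frag_induction) (simp_all add: single_left left_diff_distrib frag_extend_diff)
qed

lemma frag_extend_prod:
  fixes h :: "'a::comm_monoid_add \<Rightarrow> 'b::comm_monoid_add \<Rightarrow>\<^sub>0 int"
  assumes h: "\<And>x y. h (x + y) = h x * h y" and "h 0 = 1"
  shows "frag_extend h (\<Prod>i\<in>A. f i) = (\<Prod>i\<in>A. frag_extend h (f i))"
proof -
  have "frag_extend h 1 = 1"
    by (metis \<open>h 0 = 1\<close> frag_extend_of single_one)
  then show ?thesis
    by (induction A rule: infinite_finite_induct) (simp_all add: frag_extend_mult[OF h])
qed

lemma keys_add_nat: "keys (a + b :: 'a \<Rightarrow>\<^sub>0 nat) = keys a \<union> keys b"
  by (auto simp: in_keys_iff lookup_add)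

definition subst_zero :: "'v set \<Rightarrow> (('v \<Rightarrow>\<^sub>0 nat) \<Rightarrow>\<^sub>0 int) \<Rightarrow> ('v \<Rightarrow>\<^sub>0 nat) \<Rightarrow>\<^sub>0 int" where
  "subst_zero S = frag_extend (\<lambda>m. if keys m \<inter> S = {} then frag_of m else 0)"

lemma subst_zero_monom_mult:
  "(if keys (x + y) \<inter> S = {} then frag_of (x + y) else 0) =
   (if keys x \<inter> S = {} then frag_of x else 0) * (if keys y \<inter> S = {} then frag_of y else (0 :: ('v \<Rightarrow>\<^sub>0 nat) \<Rightarrow>\<^sub>0 int))"
  by (simp add: keys_add_nat mult_single Int_Un_distrib2)

lemma subst_zero_mult: "subst_zero S (p * q) = subst_zero S p * subst_zero S q"
  unfolding subst_zero_def by (rule frag_extend_mult) (rule subst_zero_monom_mult)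

lemma subst_zero_prod: "subst_zero S (\<Prod>i\<in>A. f i) = (\<Prod>i\<in>A. subst_zero S (f i))"
  unfolding subst_zero_def by (rule frag_extend_prod) (simp_all add: subst_zero_monom_mult)

lemma subst_zero_diff: "subst_zero S (p - q) = subst_zero S p - subst_zero S q"
  unfolding subst_zero_def by (rule frag_extend_diff)

lemma subst_zero_add: "subst_zero S (p + q) = subst_zero S p + subst_zero S q"
  unfolding subst_zero_def by (rule frag_extend_add)

lemma subst_zero_sum: "subst_zero S (\<Sum>i\<in>A. f i) = (\<Sum>i\<in>A. subst_zero S (f i))"
  unfolding subst_zero_def by (cases "finite A") (simp_all add: frag_extend_sum o_def)

lemma lookup_subst_zero:
  "lookup (subst_zero S p) m = (if keys m \<inter> S = {} then lookup p m else 0)"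
proof -
  have "keys p \<subseteq> UNIV" by simp
  then show ?thesis unfolding subst_zero_def
    by (induction p rule: frag_induction) (auto simp: frag_extend_diff lookup_minus)
qed

lemma subst_zero_subst_zero: "subst_zero S (subst_zero T p) = subst_zero (S \<union> T) p"
  by (rule poly_mapping_eqI) (auto simp: lookup_subst_zero)

lemma subst_zero_empty [simp]: "subst_zero {} p = p"
  by (rule poly_mapping_eqI) (simp add: lookup_subst_zero)

lemma lookup_subst_zero_eq: "keys m \<inter> S = {} \<Longrightarrow> lookup (subst_zero S p) m = lookup p m"
  by (simp add: lookup_subst_zero)

lemma lookup_eq_0_if_subst_zero_eq:
  "subst_zero S p = p \<Longrightarrow> keys m \<inter> S \<noteq> {} \<Longrightarrow> lookup p m = 0"
  by (metis lookup_subst_zero)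

lemma lookup_frag_of_mult:
  "lookup (frag_of k * q) (k + m) = lookup (q :: 'a::cancel_comm_monoid_add \<Rightarrow>\<^sub>0 int) m"
proof -
  have "keys q \<subseteq> UNIV" by simp
  then show ?thesis
    by (induction q rule: frag_induction) (simp_all add: mult_single right_diff_distrib lookup_minus)
qed

abbreviation monom_var :: "'v \<Rightarrow> 'v \<Rightarrow>\<^sub>0 nat" where
  "monom_var f \<equiv> Poly_Mapping.single f 1"

lemma subst_zero_var: "subst_zero S (var f) = (if f \<in> S then 0 else var f)"
  unfolding subst_zero_def var_def by simp

lemma lookup_var_mult: "lookup (var f * q) (monom_var f + m) = lookup q m"
  unfolding var_def by (rule lookup_frag_of_mult)

lemma lookup_var_minus_mult:
  assumes "subst_zero {f} q = q" "subst_zero {f} p = p"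
  shows "lookup ((var f - q) * p) (monom_var f + m) = lookup p m"
proof -
  have "lookup (q * p) (monom_var f + m) = 0"
    by (rule lookup_eq_0_if_subst_zero_eq[where S = "{f}"]) (simp_all add: subst_zero_mult assms keys_add_nat)
  then show ?thesis by (simp only: left_diff_distrib lookup_minus lookup_var_mult diff_zero)
qed

lemma lookup_var_minus_mult_var_minus_mult:
  assumes "subst_zero {f} q1 = q1" "subst_zero {f} q2 = q2" "subst_zero {f} p = p"
  shows "lookup ((var f - q1) * (var f - q2) * p) (monom_var f + monom_var f + m) = lookup p m"
proof -
  have "(var f - q1) * (var f - q2) * p = var f * ((var f - (q1 + q2)) * p) + q1 * q2 * p"
    by (simp add: algebra_simps)
  moreover have "lookup ((var f - (q1 + q2)) * p) (monom_var f + m) = lookup p m"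
    using assms by (intro lookup_var_minus_mult) (simp_all add: subst_zero_add)
  moreover have "lookup (q1 * q2 * p) (monom_var f + monom_var f + m) = 0"
    by (rule lookup_eq_0_if_subst_zero_eq[where S = "{f}"]) (simp_all add: subst_zero_mult assms keys_add_nat)
  ultimately show ?thesis by (simp only: add.assoc lookup_add lookup_var_mult add_0_right)
qed

section \<open>Renaming variables\<close>

definition rename_monom :: "('v \<Rightarrow> 'w) \<Rightarrow> ('v \<Rightarrow>\<^sub>0 nat) \<Rightarrow> 'w \<Rightarrow>\<^sub>0 nat" where
  "rename_monom \<rho> m = Abs_poly_mapping (\<lambda>g. if g \<in> range \<rho> then lookup m (inv \<rho> g) else 0)"

lemma lookup_rename_monom:
  assumes "inj \<rho>"
  shows "lookup (rename_monom \<rho> m) g = (if g \<in> range \<rho> then lookup m (inv \<rho> g) else 0)"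
proof -
  have "{g. (if g \<in> range \<rho> then lookup m (inv \<rho> g) else 0) \<noteq> 0} \<subseteq> \<rho> ` keys m"
  proof
    fix g assume "g \<in> {g. (if g \<in> range \<rho> then lookup m (inv \<rho> g) else 0) \<noteq> 0}"
    then have "g \<in> range \<rho>" "lookup m (inv \<rho> g) \<noteq> 0" by (auto split: if_splits)
    then show "g \<in> \<rho> ` keys m" by (metis f_inv_into_f image_eqI in_keys_iff)
  qed
  then have "finite {g. (if g \<in> range \<rho> then lookup m (inv \<rho> g) else 0) \<noteq> 0}"
    by (rule finite_subset) simp
  then show ?thesis unfolding rename_monom_def by (simp add: lookup_Abs_poly_mapping)
qed

lemma lookup_rename_monom_image: "inj \<rho> \<Longrightarrow> lookup (rename_monom \<rho> m) (\<rho> f) = lookup m f"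
  by (simp add: lookup_rename_monom)

lemma rename_monom_add: "inj \<rho> \<Longrightarrow> rename_monom \<rho> (a + b) = rename_monom \<rho> a + rename_monom \<rho> b"
  by (rule poly_mapping_eqI) (simp add: lookup_rename_monom lookup_add)

lemma rename_monom_single:
  "inj \<rho> \<Longrightarrow> rename_monom \<rho> (monom_var f) = monom_var (\<rho> f)"
  by (rule poly_mapping_eqI)
    (simp add: lookup_rename_monom lookup_single when_def, metis f_inv_into_f inv_f_f rangeI)

lemma rename_monom_inject: "inj \<rho> \<Longrightarrow> rename_monom \<rho> a = rename_monom \<rho> b \<longleftrightarrow> a = b"
  by (metis lookup_rename_monom_image poly_mapping_eqI)

definition rename_vars :: "('v \<Rightarrow> 'w) \<Rightarrow> (('v \<Rightarrow>\<^sub>0 nat) \<Rightarrow>\<^sub>0 int) \<Rightarrow> ('w \<Rightarrow>\<^sub>0 nat) \<Rightarrow>\<^sub>0 int" where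
  "rename_vars \<rho> = frag_extend (\<lambda>m. frag_of (rename_monom \<rho> m))"

lemma rename_vars_prod:
  assumes "inj \<rho>"
  shows "rename_vars \<rho> (\<Prod>i\<in>A. f i) = (\<Prod>i\<in>A. rename_vars \<rho> (f i))"
proof -
  have "rename_monom \<rho> 0 = 0"
    by (rule poly_mapping_eqI) (simp add: lookup_rename_monom[OF assms])
  then show ?thesis unfolding rename_vars_def
    by (intro frag_extend_prod) (simp_all add: rename_monom_add[OF assms] mult_single)
qed

lemma rename_vars_diff: "rename_vars \<rho> (p - q) = rename_vars \<rho> p - rename_vars \<rho> q"
  unfolding rename_vars_def by (rule frag_extend_diff)

lemma rename_vars_sum: "rename_vars \<rho> (\<Sum>i\<in>A. f i) = (\<Sum>i\<in>A. rename_vars \<rho> (f i))"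
  unfolding rename_vars_def by (cases "finite A") (simp_all add: frag_extend_sum o_def)

lemma rename_vars_var: "inj \<rho> \<Longrightarrow> rename_vars \<rho> (var f) = var (\<rho> f)"
  unfolding rename_vars_def var_def using rename_monom_single[of \<rho> f] by simp

lemma lookup_rename_vars:
  assumes "inj \<rho>"
  shows "lookup (rename_vars \<rho> p) (rename_monom \<rho> m) = lookup p m"
proof -
  have "keys p \<subseteq> UNIV" by simp
  then show ?thesis unfolding rename_vars_def
    by (induction p rule: frag_induction) (auto simp: frag_extend_diff lookup_minus rename_monom_inject[OF assms])
qed

definition incidence_sum :: "nat set set \<Rightarrow> nat \<Rightarrow> mpoly" where
  "incidence_sum E t = (\<Sum>f\<in>inc_edges E t. var f)"

definition edge_factor :: "nat set set \<Rightarrow> nat set \<Rightarrow> mpoly" where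
  "edge_factor E e = incidence_sum E (Min e) - incidence_sum E (Max e)"

lemma P_graph_eq_prod_edge_factor: "P_graph E = (\<Prod>e\<in>E. edge_factor E e)"
  by (simp add: P_graph_def edge_factor_def incidence_sum_def)

lemma finite_if_graph: "graph n E \<Longrightarrow> finite E"
  unfolding graph_def by (rule finite_subset[of _ "Pow {1..n}"]) auto

lemma Min_Max_mem_if_card_2: "card e = 2 \<Longrightarrow> Min e \<in> e \<and> Max e \<in> e"
  by (metis Max_in Min_in card.empty card.infinite zero_neq_numeral)

lemma inc_edges_Diff: "inc_edges (E - S) t = inc_edges E t - S"
  unfolding inc_edges_def by blast

lemma finite_inc_edges: "finite E \<Longrightarrow> finite (inc_edges E t)"
  unfolding inc_edges_def by simp

lemma subst_zero_incidence_sum: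
  "finite E \<Longrightarrow> subst_zero S (incidence_sum E t) = incidence_sum (E - S) t"
  unfolding incidence_sum_def inc_edges_Diff
  by (simp add: subst_zero_sum subst_zero_var sum.If_cases finite_inc_edges Diff_eq)

lemma subst_zero_edge_factor:
  "finite E \<Longrightarrow> subst_zero S (edge_factor E e) = edge_factor (E - S) e"
  by (simp add: edge_factor_def subst_zero_diff subst_zero_incidence_sum)

lemma subst_zero_P_graph:
  "finite F \<Longrightarrow> S \<inter> F = {} \<Longrightarrow> subst_zero S (P_graph F) = P_graph F"
  by (simp add: P_graph_eq_prod_edge_factor subst_zero_prod subst_zero_edge_factor Diff_triv Int_commute)

lemma incidence_sum_Diff_eq:
  "\<forall>e\<in>S. t \<notin> e \<Longrightarrow> incidence_sum (E - S) t = incidence_sum E t"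
  unfolding incidence_sum_def inc_edges_Diff by (rule arg_cong[of _ _ "sum var"]) (auto simp: inc_edges_def)

lemma edge_factor_doubleton:
  "p \<noteq> q \<Longrightarrow> equal_up_to_sign (edge_factor E {p, q}) (incidence_sum E p - incidence_sum E q)"
  by (cases "p < q") (auto simp: edge_factor_def equal_up_to_sign_def min_def max_def)

lemma lookup_monom_of: "finite E \<Longrightarrow> lookup (monom_of E K) = (\<lambda>e. if e \<in> E then K e else 0)"
  unfolding monom_of_def by (rule lookup_Abs_poly_mapping) (rule finite_subset[of _ E], auto)

section \<open>Relabelling vertices\<close>

lemma inj_image_if_inj: "inj \<sigma> \<Longrightarrow> inj ((`) \<sigma>)"
  using inj_on_image_Pow[of \<sigma> UNIV] by simp

lemma inc_edges_image: "inj \<sigma> \<Longrightarrow> inc_edges ((`) \<sigma> ` F) (\<sigma> i) = (`) \<sigma> ` inc_edges F i"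
  unfolding inc_edges_def by (auto simp: inj_image_mem_iff dest: injD)

lemma deg_image: "inj \<sigma> \<Longrightarrow> deg ((`) \<sigma> ` F) (\<sigma> i) = deg F i"
  unfolding deg_def inc_edges_image
  by (rule card_image) (meson inj_image_if_inj inj_on_subset subset_UNIV)

lemma nice_if_nice_image:
  assumes "inj \<sigma>" "nice ((`) \<sigma> ` F)"
  shows "nice F"
  unfolding nice_def
proof
  assume "\<exists>i j. {i, j} \<in> F \<and> i \<noteq> j \<and> deg F i = 1 \<and> deg F j = 1"
  then obtain i j where "{i, j} \<in> F" "i \<noteq> j" "deg F i = 1" "deg F j = 1" by blast
  then have "{\<sigma> i, \<sigma> j} \<in> (`) \<sigma> ` F" "\<sigma> i \<noteq> \<sigma> j" "deg ((`) \<sigma> ` F) (\<sigma> i) = 1" "deg ((`) \<sigma> ` F) (\<sigma> j) = 1"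
    using assms(1) by (auto simp: deg_image inj_eq image_eqI[where x = "{i, j}"])
  with assms(2) show False unfolding nice_def by blast
qed

lemma edge_factor_image:
  assumes "strict_mono \<sigma>" "finite F" "d \<in> F" "card d = 2"
  shows "rename_vars ((`) \<sigma>) (edge_factor F d) = edge_factor ((`) \<sigma> ` F) (\<sigma> ` d)"
proof -
  have inj: "inj \<sigma>" "inj ((`) \<sigma>)"
    using strict_mono_imp_inj_on[OF assms(1)] inj_image_if_inj by auto
  have "finite d" "d \<noteq> {}" using assms(4) by (auto intro: card_ge_0_finite)
  then have Min_Max: "Min (\<sigma> ` d) = \<sigma> (Min d)" "Max (\<sigma> ` d) = \<sigma> (Max d)"
    using mono_Min_commute mono_Max_commute strict_mono_mono[OF assms(1)] by metis+
  have "rename_vars ((`) \<sigma>) (incidence_sum F i) = incidence_sum ((`) \<sigma> ` F) (\<sigma> i)" for i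
    unfolding incidence_sum_def rename_vars_sum rename_vars_var[OF inj(2)] inc_edges_image[OF inj(1)]
    by (rule sum.reindex[OF inj_on_subset[OF inj(2)], unfolded o_def, symmetric]) simp
  then show ?thesis unfolding edge_factor_def rename_vars_diff Min_Max by simp
qed

lemma P_graph_image:
  assumes "strict_mono \<sigma>" "finite F" "\<forall>d\<in>F. card d = 2"
  shows "P_graph ((`) \<sigma> ` F) = rename_vars ((`) \<sigma>) (P_graph F)"
proof -
  have inj: "inj ((`) \<sigma>)"
    using strict_mono_imp_inj_on[OF assms(1)] inj_image_if_inj by auto
  have "rename_vars ((`) \<sigma>) (P_graph F) = (\<Prod>d\<in>F. edge_factor ((`) \<sigma> ` F) (\<sigma> ` d))"
    unfolding P_graph_eq_prod_edge_factor rename_vars_prod[OF inj] using assms edge_factor_image by simp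
  also have "\<dots> = P_graph ((`) \<sigma> ` F)"
    unfolding P_graph_eq_prod_edge_factor
    by (rule prod.reindex[OF inj_on_subset[OF inj], unfolded o_def, symmetric]) simp
  finally show ?thesis ..
qed

lemma alg_1b_choosable_image:
  assumes "strict_mono \<sigma>" "finite F" "\<forall>d\<in>F. card d = 2" "alg_1b_choosable F b"
  shows "alg_1b_choosable ((`) \<sigma> ` F) b"
proof -
  define \<rho> where "\<rho> = (`) \<sigma>"
  have inj: "inj \<rho>" unfolding \<rho>_def using strict_mono_imp_inj_on[OF assms(1)] inj_image_if_inj by auto
  then have inj_on: "inj_on \<rho> A" for A by (rule inj_on_subset) simp
  obtain K where K: "(\<Sum>e\<in>F. K e) = card F" "\<forall>e\<in>F. K e \<le> b - 1" "lookup (P_graph F) (monom_of F K) \<noteq> 0"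
    using assms(4) unfolding alg_1b_choosable_def by blast
  define K' where "K' = K \<circ> inv \<rho>"
  have fin: "finite (\<rho> ` F)" using assms(2) by simp
  have "(\<Sum>e\<in>\<rho> ` F. K' e) = card (\<rho> ` F)"
    unfolding sum.reindex[OF inj_on] card_image[OF inj_on] using K(1) by (simp add: K'_def inv_f_f[OF inj])
  moreover have "\<forall>e\<in>\<rho> ` F. K' e \<le> b - 1" using K(2) by (auto simp: K'_def inv_f_f[OF inj])
  moreover have "monom_of (\<rho> ` F) K' = rename_monom \<rho> (monom_of F K)"
    using assms(2) fin inj
    by (intro poly_mapping_eqI) (auto simp: lookup_monom_of lookup_rename_monom K'_def inj_image_mem_iff)
  moreover have "P_graph (\<rho> ` F) = rename_vars \<rho> (P_graph F)"
    unfolding \<rho>_def by (rule P_graph_image[OF assms(1-3)])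
  ultimately have "alg_1b_choosable (\<rho> ` F) b"
    using K(3) unfolding alg_1b_choosable_def by (metis lookup_rename_vars[OF inj])
  then show ?thesis unfolding \<rho>_def .
qed

lemma ex_strict_mono_onto:
  "finite W \<Longrightarrow> 0 \<notin> W \<Longrightarrow> \<exists>\<sigma>::nat \<Rightarrow> nat. strict_mono \<sigma> \<and> \<sigma> 0 = 0 \<and> \<sigma> ` {1..card W} = W"
proof (induction W rule: finite_linorder_max_induct)
  case empty
  show ?case by (rule exI[of _ id]) (simp add: strict_mono_def)
next
  case (insert w W)
  then obtain \<sigma> where \<sigma>: "strict_mono \<sigma>" "\<sigma> 0 = 0" "\<sigma> ` {1..card W} = W" by auto
  define k where "k = card W"
  define \<tau> where "\<tau> i = (if i \<le> k then \<sigma> i else w + (i - Suc k))" for i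
  have below_w: "\<sigma> i < w" if "i \<le> k" for i
    using \<sigma> insert that unfolding k_def by (cases "i = 0") auto
  have "\<tau> i < \<tau> j" if "i < j" for i j
    using below_w[of i] \<sigma>(1) that unfolding \<tau>_def strict_mono_def by (cases "j \<le> k") auto
  then have "strict_mono \<tau>" by (rule strict_monoI)
  moreover have "\<tau> ` {1..card (insert w W)} = insert w W"
  proof -
    have "{1..card (insert w W)} = insert (Suc k) {1..k}" using insert k_def by auto
    moreover have "\<tau> ` {1..k} = \<sigma> ` {1..k}" by (rule image_cong) (auto simp: \<tau>_def)
    moreover have "\<tau> (Suc k) = w" by (simp add: \<tau>_def)
    ultimately show ?thesis using \<sigma>(3) unfolding k_def by simp
  qed
  moreover have "\<tau> 0 = 0" using \<sigma>(2) by (simp add: \<tau>_def)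
  ultimately show ?case by blast
qed

lemma ex_graph_relabelling:
  fixes W :: "nat set"
  assumes "finite W" "0 \<notin> W" "\<forall>e\<in>E. e \<subseteq> W \<and> card e = 2"
  obtains F \<sigma> where "graph (card W) F" "strict_mono \<sigma>" "(`) \<sigma> ` F = E"
proof -
  obtain \<sigma> :: "nat \<Rightarrow> nat" where \<sigma>: "strict_mono \<sigma>" "\<sigma> ` {1..card W} = W"
    using ex_strict_mono_onto assms(1,2) by blast
  have inj: "inj \<sigma>" using \<sigma>(1) by (rule strict_mono_imp_inj_on)
  define F where "F = {d. d \<subseteq> {1..card W} \<and> \<sigma> ` d \<in> E}"
  have "E \<subseteq> (`) \<sigma> ` F"
  proof
    fix e assume "e \<in> E"
    have "e \<subseteq> \<sigma> ` {i\<in>{1..card W}. \<sigma> i \<in> e}"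
    proof
      fix x assume "x \<in> e"
      then obtain i where "i \<in> {1..card W}" "\<sigma> i = x"
        using assms(3) \<sigma>(2) \<open>e \<in> E\<close> by (metis imageE subsetD)
      with \<open>x \<in> e\<close> show "x \<in> \<sigma> ` {i\<in>{1..card W}. \<sigma> i \<in> e}" by blast
    qed
    then have "\<sigma> ` {i\<in>{1..card W}. \<sigma> i \<in> e} = e" by blast
    with \<open>e \<in> E\<close> show "e \<in> (`) \<sigma> ` F"
      unfolding F_def by (intro image_eqI[of _ _ "{i\<in>{1..card W}. \<sigma> i \<in> e}"]) auto
  qed
  then have "(`) \<sigma> ` F = E" unfolding F_def by auto
  moreover have "graph (card W) F"
    using assms(3) card_image[OF inj_on_subset[OF inj]] unfolding graph_def F_def by auto
  ultimately show ?thesis using that \<sigma>(1) by blast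
qed

section \<open>Coefficient-reducible edge sets\<close>

definition coefficient_reducible :: "nat set set \<Rightarrow> nat set set \<Rightarrow> nat \<Rightarrow> bool" where
  "coefficient_reducible E D b \<longleftrightarrow>
     (\<exists>mD. keys mD \<subseteq> D \<and> (\<Sum>e\<in>D. lookup mD e) = card D \<and> (\<forall>e. lookup mD e \<le> b - 1) \<and>
        (\<forall>m'. keys m' \<subseteq> E - D \<longrightarrow>
           equal_up_to_sign (lookup (P_graph E) (mD + m')) (lookup (P_graph (E - D)) m')))"

lemma coefficient_reducible_mono:
  "coefficient_reducible E D b \<Longrightarrow> b \<le> b' \<Longrightarrow> coefficient_reducible E D b'"
  unfolding coefficient_reducible_def by (meson diff_le_mono order_trans)

lemma alg_1b_choosable_if_coefficient_reducible:
  assumes fin: "finite E" and "D \<subseteq> E" and "coefficient_reducible E D b" and "alg_1b_choosable (E - D) b"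
  shows "alg_1b_choosable E b"
proof -
  obtain mD where mD: "keys mD \<subseteq> D" "(\<Sum>e\<in>D. lookup mD e) = card D" "\<forall>e. lookup mD e \<le> b - 1"
    and coeff: "\<And>m'. keys m' \<subseteq> E - D \<Longrightarrow>
      equal_up_to_sign (lookup (P_graph E) (mD + m')) (lookup (P_graph (E - D)) m')"
    using assms(3) unfolding coefficient_reducible_def by blast
  obtain K' where K': "(\<Sum>e\<in>E - D. K' e) = card (E - D)" "\<forall>e\<in>E - D. K' e \<le> b - 1"
    "lookup (P_graph (E - D)) (monom_of (E - D) K') \<noteq> 0"
    using assms(4) unfolding alg_1b_choosable_def by blast
  define K where "K e = (if e \<in> D then lookup mD e else K' e)" for e
  have "monom_of E K = mD + monom_of (E - D) K'"
    using mD(1) assms(2) fin by (intro poly_mapping_eqI) (auto simp: lookup_monom_of lookup_add K_def in_keys_iff)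
  moreover have "keys (monom_of (E - D) K') \<subseteq> E - D"
    using fin by (auto simp: in_keys_iff lookup_monom_of split: if_splits)
  ultimately have "lookup (P_graph E) (monom_of E K) \<noteq> 0"
    using coeff K'(3) by (force simp: equal_up_to_sign_def)
  moreover have "(\<Sum>e\<in>E. K e) = card E"
  proof -
    have "(\<Sum>e\<in>E. K e) = (\<Sum>e\<in>D. K e) + (\<Sum>e\<in>E - D. K e)"
      using sum.subset_diff[OF assms(2) fin] by (simp add: add.commute)
    also have "\<dots> = card D + card (E - D)" using mD(2) K'(1) unfolding K_def by simp
    also have "\<dots> = card E" using card_Diff_subset[OF finite_subset[OF assms(2) fin] assms(2)]
        card_mono[OF fin assms(2)] by simp
    finally show ?thesis .
  qed
  moreover have "\<forall>e\<in>E. K e \<le> b - 1" using mD(3) K'(2) unfolding K_def by simp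
  ultimately show ?thesis unfolding alg_1b_choosable_def by blast
qed

text \<open>The variables \<open>S0\<close> are set to zero before dividing by \<open>x^mM\<close>, the variables \<open>S\<close> after it.
  Afterwards the factors of the edges outside \<open>D\<close> form \<open>P_graph (E - D)\<close>, because the edges of
  \<open>D\<close> that keep their variables only meet vertices all of whose edges lie in \<open>D\<close>.\<close>
lemma lookup_P_graph_remove_edges:
  assumes "graph n E" "D \<subseteq> E" "S0 \<union> S \<subseteq> D" "\<forall>t\<in>\<Union>(D - (S0 \<union> S)). inc_edges E t \<subseteq> D"
    and "equal_up_to_sign (\<Prod>e\<in>D. edge_factor (E - S0) e) (frag_of mM * A)"
    and "keys mM \<inter> S0 = {}" "keys m \<inter> (S0 \<union> S) = {}" "keys m' \<subseteq> E - D"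
  shows "equal_up_to_sign (lookup (P_graph E) (mM + (m + m')))
           (lookup (subst_zero S A * P_graph (E - D)) (m + m'))"
proof -
  have fin: "finite E" using assms(1) by (rule finite_if_graph)
  define B where "B = (\<Prod>e\<in>E - D. edge_factor E e)"
  have "edge_factor (E - (S \<union> S0)) e = edge_factor (E - D) e" if e: "e \<in> E - D" for e
  proof -
    have "inc_edges (E - (S \<union> S0)) t = inc_edges (E - D) t" if "t \<in> e" for t
      using assms(3,4) e that unfolding inc_edges_def by blast
    moreover have "Min e \<in> e" "Max e \<in> e"
      using Min_Max_mem_if_card_2 assms(1) e unfolding graph_def by blast+
    ultimately show ?thesis unfolding edge_factor_def incidence_sum_def by simp
  qed
  then have B: "subst_zero (S \<union> S0) B = P_graph (E - D)"
    unfolding B_def P_graph_eq_prod_edge_factor subst_zero_prod subst_zero_edge_factor[OF fin] by simp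
  have "keys (m + m') \<inter> S = {}" using assms(3,7,8) by (auto simp: keys_add_nat)
  then have "lookup (frag_of mM * (A * subst_zero S0 B)) (mM + (m + m')) =
      lookup (subst_zero S (A * subst_zero S0 B)) (m + m')"
    by (simp add: lookup_frag_of_mult lookup_subst_zero_eq)
  also have "subst_zero S (A * subst_zero S0 B) = subst_zero S A * P_graph (E - D)"
    by (simp add: subst_zero_mult subst_zero_subst_zero B)
  finally have coeff: "lookup (frag_of mM * (A * subst_zero S0 B)) (mM + (m + m')) =
    lookup (subst_zero S A * P_graph (E - D)) (m + m')" .
  have "subst_zero S0 (P_graph E) = (\<Prod>e\<in>D. edge_factor (E - S0) e) * subst_zero S0 B"
    unfolding P_graph_eq_prod_edge_factor B_def using prod.subset_diff[OF assms(2) fin]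
    by (simp add: mult.commute subst_zero_mult subst_zero_prod subst_zero_edge_factor[OF fin])
  then have "equal_up_to_sign (subst_zero S0 (P_graph E)) (frag_of mM * (A * subst_zero S0 B))"
    using equal_up_to_sign_mult[OF assms(5) equal_up_to_sign_refl] by (simp add: mult.assoc)
  then have "equal_up_to_sign (lookup (subst_zero S0 (P_graph E)) (mM + (m + m')))
      (lookup (subst_zero S A * P_graph (E - D)) (m + m'))"
    unfolding coeff[symmetric] by (rule equal_up_to_sign_lookup)
  moreover have "keys (mM + (m + m')) \<inter> S0 = {}"
    using assms(3,6,7,8) by (auto simp: keys_add_nat)
  ultimately show ?thesis by (simp add: lookup_subst_zero_eq)
qed

lemma coefficient_reducible_intro:
  assumes "graph n E" "D \<subseteq> E" "S0 \<union> S \<subseteq> D" "\<forall>t\<in>\<Union>(D - (S0 \<union> S)). inc_edges E t \<subseteq> D"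
    and "equal_up_to_sign (\<Prod>e\<in>D. edge_factor (E - S0) e) (frag_of mM * A)"
    and "keys mM \<inter> S0 = {}" "keys m \<inter> (S0 \<union> S) = {}"
    and "keys (mM + m) \<subseteq> D" "(\<Sum>e\<in>D. lookup (mM + m) e) = card D" "\<forall>e. lookup (mM + m) e \<le> b - 1"
    and "\<And>m'. keys m' \<subseteq> E - D \<Longrightarrow>
      lookup (subst_zero S A * P_graph (E - D)) (m + m') = lookup (P_graph (E - D)) m'"
  shows "coefficient_reducible E D b"
proof -
  have "equal_up_to_sign (lookup (P_graph E) ((mM + m) + m')) (lookup (P_graph (E - D)) m')"
    if "keys m' \<subseteq> E - D" for m'
    using lookup_P_graph_remove_edges[OF assms(1-7) that] assms(11)[OF that] by (simp add: add.assoc)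
  then show ?thesis unfolding coefficient_reducible_def using assms(8-10) by blast
qed

lemma incidence_sum_remove:
  "finite E \<Longrightarrow> e \<in> inc_edges E t \<Longrightarrow> incidence_sum E t = var e + incidence_sum (E - {e}) t"
  unfolding incidence_sum_def inc_edges_Diff by (simp add: sum.remove finite_inc_edges)

lemma coefficient_reducible_pendant_path:
  assumes "graph n E" "distinct [u, v, w]"
    and "inc_edges E u = {{u, v}}" "inc_edges E v = {{u, v}, {v, w}}"
  shows "coefficient_reducible E {{u, v}, {v, w}} 2"
proof -
  define e1 e2 where "e1 = {u, v}" and "e2 = {v, w}"
  define Sw where "Sw = incidence_sum (E - {e2}) w"
  have fin: "finite E" using assms(1) by (rule finite_if_graph)
  have ne: "e1 \<noteq> e2" using assms(2) by (auto simp: e1_def e2_def doubleton_eq_iff)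
  have D: "{e1, e2} \<subseteq> E" using assms(4) by (auto simp: inc_edges_def e1_def e2_def)
  have iu: "incidence_sum E u = var e1" and iv: "incidence_sum E v = var e1 + var e2"
    using assms(3,4) ne by (simp_all add: incidence_sum_def e1_def e2_def)
  have iw: "incidence_sum E w = var e2 + Sw"
    unfolding Sw_def using D by (intro incidence_sum_remove fin) (auto simp: inc_edges_def e2_def)
  have "equal_up_to_sign (edge_factor E e1) (var e2)"
    using edge_factor_doubleton[of u v E, folded e1_def] assms(2) by (simp add: iu iv)
  moreover have "equal_up_to_sign (edge_factor E e2) (var e1 - Sw)"
    using edge_factor_doubleton[of v w E, folded e2_def] assms(2) by (simp add: iv iw)
  ultimately have "equal_up_to_sign (edge_factor E e1 * edge_factor E e2) (var e2 * (var e1 - Sw))"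
    by (rule equal_up_to_sign_mult)
  then have "equal_up_to_sign (\<Prod>e\<in>{e1, e2}. edge_factor (E - {}) e) (frag_of (monom_var e2) * (var e1 - Sw))"
    using ne by (simp add: var_def)
  note prod = this
  have "coefficient_reducible E {e1, e2} 2"
  proof (rule coefficient_reducible_intro[OF assms(1) D _ _ prod, where S = "{e2}" and m = "monom_var e1"])
    have "{e1, e2} - ({} \<union> {e2}) = {e1}" using ne by auto
    then have "\<Union>({e1, e2} - ({} \<union> {e2})) = {u, v}" by (auto simp: e1_def)
    moreover have "\<forall>t\<in>{u, v}. inc_edges E t \<subseteq> {e1, e2}"
      using assms(3,4)[folded e1_def e2_def] by auto
    ultimately show "\<forall>t\<in>\<Union>({e1, e2} - ({} \<union> {e2})). inc_edges E t \<subseteq> {e1, e2}" by simp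
    have "subst_zero {e2} (var e1 - Sw) = var e1 - Sw"
      using fin ne by (simp add: subst_zero_diff subst_zero_var Sw_def subst_zero_incidence_sum)
    moreover have "subst_zero {e1} Sw = Sw" "subst_zero {e1} (P_graph (E - {e1, e2})) = P_graph (E - {e1, e2})"
      using fin assms(2) by (simp_all add: subst_zero_P_graph Sw_def subst_zero_incidence_sum
          incidence_sum_Diff_eq e1_def)
    ultimately show "lookup (subst_zero {e2} (var e1 - Sw) * P_graph (E - {e1, e2})) (monom_var e1 + m') =
        lookup (P_graph (E - {e1, e2})) m'" for m'
      by (simp only: lookup_var_minus_mult)
  qed (use ne in \<open>simp_all add: lookup_add lookup_single when_def keys_add_nat\<close>)
  then show ?thesis by (simp add: e1_def e2_def)
qed

lemma coefficient_reducible_path_component: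
  assumes "graph n E" "distinct [u, v, w, z]"
    and "inc_edges E u = {{u, v}}" "inc_edges E v = {{u, v}, {v, w}}"
    and "inc_edges E w = {{v, w}, {w, z}}" "inc_edges E z = {{w, z}}"
  shows "coefficient_reducible E {{u, v}, {v, w}, {w, z}} 3"
proof -
  define e1 e2 e3 where "e1 = {u, v}" and "e2 = {v, w}" and "e3 = {w, z}"
  define F where "F = E - {e3}"
  have ne: "e1 \<noteq> e2" "e1 \<noteq> e3" "e2 \<noteq> e3"
    using assms(2) by (auto simp: e1_def e2_def e3_def doubleton_eq_iff)
  have D: "{e1, e2, e3} \<subseteq> E" using assms(4,5) by (auto simp: inc_edges_def e1_def e2_def e3_def)
  have "inc_edges F u = {e1}" "inc_edges F v = {e1, e2}" "inc_edges F w = {e2}" "inc_edges F z = {}"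
    using ne unfolding F_def inc_edges_Diff assms(3-6)[folded e1_def e2_def e3_def] by auto
  then have "incidence_sum F u = var e1" "incidence_sum F v = var e1 + var e2"
    "incidence_sum F w = var e2" "incidence_sum F z = 0"
    using ne by (simp_all add: incidence_sum_def)
  then have "equal_up_to_sign (edge_factor F e1) (var e2)" "equal_up_to_sign (edge_factor F e2) (var e1)"
    "equal_up_to_sign (edge_factor F e3) (var e2)"
    using edge_factor_doubleton[of u v F, folded e1_def] edge_factor_doubleton[of v w F, folded e2_def]
      edge_factor_doubleton[of w z F, folded e3_def] assms(2) by simp_all
  then have "equal_up_to_sign (\<Prod>e\<in>{e1, e2, e3}. edge_factor F e) (var e2 * (var e1 * var e2))"
    using ne by (simp add: equal_up_to_sign_mult)
  then have "equal_up_to_sign (\<Prod>e\<in>{e1, e2, e3}. edge_factor (E - {e3}) e)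
      (frag_of (monom_var e2 + monom_var e2 + monom_var e1) * 1)"
    unfolding F_def by (simp add: var_def mult_single ac_simps)
  note prod = this
  have "coefficient_reducible E {e1, e2, e3} 3"
  proof (rule coefficient_reducible_intro[OF assms(1) D _ _ prod, where S = "{}" and m = 0])
    have "{e1, e2, e3} - ({e3} \<union> {}) = {e1, e2}" using ne by auto
    then have "\<Union>({e1, e2, e3} - ({e3} \<union> {})) = {u, v, w}" by (auto simp: e1_def e2_def)
    moreover have "\<forall>t\<in>{u, v, w}. inc_edges E t \<subseteq> {e1, e2, e3}"
      using assms(3-5)[folded e1_def e2_def e3_def] by auto
    ultimately show "\<forall>t\<in>\<Union>({e1, e2, e3} - ({e3} \<union> {})). inc_edges E t \<subseteq> {e1, e2, e3}" by simp
  qed (use ne in \<open>simp_all add: lookup_add lookup_single when_def keys_add_nat\<close>)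
  then show ?thesis by (simp add: e1_def e2_def e3_def)
qed

lemma coefficient_reducible_degree_2_edge:
  assumes "graph n E" "u \<noteq> v" "a \<notin> {u, v}" "b \<notin> {u, v}"
    and "inc_edges E u = {{u, a}, {u, v}}" "inc_edges E v = {{u, v}, {v, b}}"
  shows "coefficient_reducible E {{u, a}, {u, v}, {v, b}} 3"
proof -
  define e0 e1 e2 where "e0 = {u, a}" and "e1 = {u, v}" and "e2 = {v, b}"
  define F where "F = E - {e2}"
  define Sa Sb where "Sa = incidence_sum (F - {e0}) a" and "Sb = incidence_sum (F - {e0}) b"
  have fin: "finite E" using assms(1) by (rule finite_if_graph)
  have ne: "e0 \<noteq> e1" "e0 \<noteq> e2" "e1 \<noteq> e2"
    using assms(2-4) by (auto simp: e0_def e1_def e2_def doubleton_eq_iff)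
  have D: "{e0, e1, e2} \<subseteq> E" using assms(5,6) by (auto simp: inc_edges_def e0_def e1_def e2_def)
  have "inc_edges F u = {e0, e1}" "inc_edges F v = {e1}"
    using ne unfolding F_def inc_edges_Diff assms(5,6)[folded e0_def e1_def e2_def] by auto
  moreover have "incidence_sum F a = var e0 + Sa"
    unfolding Sa_def using D ne by (intro incidence_sum_remove) (auto simp: F_def fin inc_edges_def e0_def)
  ultimately have "equal_up_to_sign (edge_factor F e0) (var e1 - Sa)"
    "equal_up_to_sign (edge_factor F e1) (var e0)"
    "equal_up_to_sign (edge_factor F e2) (var e1 - incidence_sum F b)"
    using edge_factor_doubleton[of u a F, folded e0_def] edge_factor_doubleton[of u v F, folded e1_def]
      edge_factor_doubleton[of v b F, folded e2_def] assms(2-4) ne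
    by (simp_all add: incidence_sum_def)
  then have "equal_up_to_sign (\<Prod>e\<in>{e0, e1, e2}. edge_factor F e)
      ((var e1 - Sa) * (var e0 * (var e1 - incidence_sum F b)))"
    using ne by (simp add: equal_up_to_sign_mult)
  then have "equal_up_to_sign (\<Prod>e\<in>{e0, e1, e2}. edge_factor (E - {e2}) e)
      (frag_of (monom_var e0) * ((var e1 - Sa) * (var e1 - incidence_sum F b)))"
    unfolding F_def by (simp add: var_def ac_simps)
  note prod = this
  have "coefficient_reducible E {e0, e1, e2} 3"
  proof (rule coefficient_reducible_intro[OF assms(1) D _ _ prod, where S = "{e0}" and m = "monom_var e1 + monom_var e1"])
    have "{e0, e1, e2} - ({e2} \<union> {e0}) = {e1}" using ne by auto
    then have "\<Union>({e0, e1, e2} - ({e2} \<union> {e0})) = {u, v}" by (auto simp: e1_def)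
    moreover have "\<forall>t\<in>{u, v}. inc_edges E t \<subseteq> {e0, e1, e2}"
      using assms(5,6)[folded e0_def e1_def e2_def] by auto
    ultimately show "\<forall>t\<in>\<Union>({e0, e1, e2} - ({e2} \<union> {e0})). inc_edges E t \<subseteq> {e0, e1, e2}" by simp
    define P' where "P' = P_graph (E - {e0, e1, e2})"
    have "subst_zero {e0} ((var e1 - Sa) * (var e1 - incidence_sum F b)) = (var e1 - Sa) * (var e1 - Sb)"
      using fin ne by (simp add: subst_zero_mult subst_zero_diff subst_zero_var subst_zero_incidence_sum
          Sa_def Sb_def F_def)
    moreover have "subst_zero {e1} Sa = Sa" "subst_zero {e1} Sb = Sb" "subst_zero {e1} P' = P'"
      using fin assms(3,4) by (simp_all add: Sa_def Sb_def F_def P'_def subst_zero_incidence_sum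
          subst_zero_P_graph incidence_sum_Diff_eq e1_def)
    ultimately show "lookup (subst_zero {e0} ((var e1 - Sa) * (var e1 - incidence_sum F b)) * P')
        (monom_var e1 + monom_var e1 + m') = lookup P' m'" for m'
      by (simp only: lookup_var_minus_mult_var_minus_mult)
  qed (use ne in \<open>simp_all add: lookup_add lookup_single when_def keys_add_nat\<close>)
  then show ?thesis by (simp add: e0_def e1_def e2_def)
qed

lemma coefficient_reducible_4_cycle_component:
  assumes "graph n E" "distinct [u, v, b, a]"
    and "inc_edges E u = {{u, a}, {u, v}}" "inc_edges E v = {{u, v}, {v, b}}"
    and "inc_edges E a = {{u, a}, {a, b}}" "inc_edges E b = {{v, b}, {a, b}}"
  shows "coefficient_reducible E {{u, a}, {u, v}, {v, b}, {a, b}} 3"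
proof -
  define e0 e1 e2 e3 where "e0 = {u, a}" and "e1 = {u, v}" and "e2 = {v, b}" and "e3 = {a, b}"
  define F where "F = E - {e2, e3}"
  have ne: "e0 \<noteq> e1" "e0 \<noteq> e2" "e0 \<noteq> e3" "e1 \<noteq> e2" "e1 \<noteq> e3" "e2 \<noteq> e3"
    using assms(2) by (auto simp: e0_def e1_def e2_def e3_def doubleton_eq_iff)
  have D: "{e0, e1, e2, e3} \<subseteq> E" using assms(3,6) by (auto simp: inc_edges_def e0_def e1_def e2_def e3_def)
  have "inc_edges F u = {e0, e1}" "inc_edges F v = {e1}" "inc_edges F a = {e0}" "inc_edges F b = {}"
    using ne unfolding F_def inc_edges_Diff assms(3-6)[folded e0_def e1_def e2_def e3_def] by auto
  then have "equal_up_to_sign (edge_factor F e0) (var e1)" "equal_up_to_sign (edge_factor F e1) (var e0)"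
    "equal_up_to_sign (edge_factor F e2) (var e1)" "equal_up_to_sign (edge_factor F e3) (var e0)"
    using edge_factor_doubleton[of u a F, folded e0_def] edge_factor_doubleton[of u v F, folded e1_def]
      edge_factor_doubleton[of v b F, folded e2_def] edge_factor_doubleton[of a b F, folded e3_def]
      assms(2) ne by (simp_all add: incidence_sum_def)
  then have "equal_up_to_sign (\<Prod>e\<in>{e0, e1, e2, e3}. edge_factor F e) (var e1 * (var e0 * (var e1 * var e0)))"
    using ne by (simp add: equal_up_to_sign_mult)
  then have "equal_up_to_sign (\<Prod>e\<in>{e0, e1, e2, e3}. edge_factor (E - {e2, e3}) e)
      (frag_of (monom_var e0 + monom_var e0 + monom_var e1 + monom_var e1) * 1)"
    unfolding F_def by (simp add: var_def mult_single ac_simps)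
  note prod = this
  have "coefficient_reducible E {e0, e1, e2, e3} 3"
  proof (rule coefficient_reducible_intro[OF assms(1) D _ _ prod, where S = "{}" and m = 0])
    have "{e0, e1, e2, e3} - ({e2, e3} \<union> {}) = {e0, e1}" using ne by auto
    then have "\<Union>({e0, e1, e2, e3} - ({e2, e3} \<union> {})) = {u, a, v}" by (auto simp: e0_def e1_def)
    moreover have "\<forall>t\<in>{u, a, v}. inc_edges E t \<subseteq> {e0, e1, e2, e3}"
      using assms(3-5)[folded e0_def e1_def e2_def e3_def] by auto
    ultimately show "\<forall>t\<in>\<Union>({e0, e1, e2, e3} - ({e2, e3} \<union> {})). inc_edges E t \<subseteq> {e0, e1, e2, e3}" by simp
  qed (use ne in \<open>simp_all add: lookup_add lookup_single when_def keys_add_nat\<close>)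
  then show ?thesis by (simp add: e0_def e1_def e2_def e3_def)
qed

lemma coefficient_reducible_paw_component:
  assumes "graph n E" "distinct [u, v, a, y]"
    and "inc_edges E u = {{u, a}, {u, v}}" "inc_edges E v = {{u, v}, {v, a}}"
    and "inc_edges E a = {{u, a}, {v, a}, {a, y}}" "inc_edges E y = {{a, y}}"
  shows "coefficient_reducible E {{u, a}, {u, v}, {v, a}, {a, y}} 3"
proof -
  define e0 e1 e2 e3 where "e0 = {u, a}" and "e1 = {u, v}" and "e2 = {v, a}" and "e3 = {a, y}"
  define F where "F = E - {e2, e3}"
  have ne: "e0 \<noteq> e1" "e0 \<noteq> e2" "e0 \<noteq> e3" "e1 \<noteq> e2" "e1 \<noteq> e3" "e2 \<noteq> e3"
    using assms(2) by (auto simp: e0_def e1_def e2_def e3_def doubleton_eq_iff)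
  have D: "{e0, e1, e2, e3} \<subseteq> E" using assms(3,5) by (auto simp: inc_edges_def e0_def e1_def e2_def e3_def)
  have "inc_edges F u = {e0, e1}" "inc_edges F v = {e1}" "inc_edges F a = {e0}" "inc_edges F y = {}"
    using ne unfolding F_def inc_edges_Diff assms(3-6)[folded e0_def e1_def e2_def e3_def] by auto
  then have "equal_up_to_sign (edge_factor F e0) (var e1)" "equal_up_to_sign (edge_factor F e1) (var e0)"
    "equal_up_to_sign (edge_factor F e2) (var e1 - var e0)" "equal_up_to_sign (edge_factor F e3) (var e0)"
    using edge_factor_doubleton[of u a F, folded e0_def] edge_factor_doubleton[of u v F, folded e1_def]
      edge_factor_doubleton[of v a F, folded e2_def] edge_factor_doubleton[of a y F, folded e3_def]
      assms(2) ne by (simp_all add: incidence_sum_def)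
  then have "equal_up_to_sign (\<Prod>e\<in>{e0, e1, e2, e3}. edge_factor F e)
      (var e1 * (var e0 * ((var e1 - var e0) * var e0)))"
    using ne by (simp add: equal_up_to_sign_mult)
  moreover have "frag_of (monom_var e0 + monom_var e0 + monom_var e1) = var e0 * var e0 * var e1"
    by (simp add: var_def mult_single)
  ultimately have "equal_up_to_sign (\<Prod>e\<in>{e0, e1, e2, e3}. edge_factor (E - {e2, e3}) e)
      (frag_of (monom_var e0 + monom_var e0 + monom_var e1) * (var e1 - var e0))"
    unfolding F_def by (simp add: ac_simps)
  note prod = this
  have "coefficient_reducible E {e0, e1, e2, e3} 3"
  proof (rule coefficient_reducible_intro[OF assms(1) D _ _ prod, where S = "{e0}" and m = "monom_var e1"])
    have "{e0, e1, e2, e3} - ({e2, e3} \<union> {e0}) = {e1}" using ne by auto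
    then have "\<Union>({e0, e1, e2, e3} - ({e2, e3} \<union> {e0})) = {u, v}" by (auto simp: e1_def)
    moreover have "\<forall>t\<in>{u, v}. inc_edges E t \<subseteq> {e0, e1, e2, e3}"
      using assms(3,4)[folded e0_def e1_def e2_def e3_def] by auto
    ultimately show "\<forall>t\<in>\<Union>({e0, e1, e2, e3} - ({e2, e3} \<union> {e0})). inc_edges E t \<subseteq> {e0, e1, e2, e3}" by simp
    have "subst_zero {e0} (var e1 - var e0) = var e1" using ne by (simp add: subst_zero_diff subst_zero_var)
    then show "lookup (subst_zero {e0} (var e1 - var e0) * P_graph (E - {e0, e1, e2, e3})) (monom_var e1 + m') =
        lookup (P_graph (E - {e0, e1, e2, e3})) m'" for m'
      by (simp only: lookup_var_mult)
  qed (use ne in \<open>simp_all add: lookup_add lookup_single when_def keys_add_nat\<close>)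
  then show ?thesis by (simp add: e0_def e1_def e2_def e3_def)
qed

lemma inc_edges_eq_if_deg_1:
  assumes "deg E u = 1" "{u, v} \<in> E"
  shows "inc_edges E u = {{u, v}}"
proof -
  obtain f where "inc_edges E u = {f}"
    using assms(1) unfolding deg_def by (metis One_nat_def card_1_singleton_iff)
  moreover have "{u, v} \<in> inc_edges E u" using assms(2) by (simp add: inc_edges_def)
  ultimately show ?thesis by simp
qed

lemma obtain_inc_edges_if_deg_2:
  assumes "graph n E" "deg E v = 2" "{u, v} \<in> E"
  obtains w where "w \<notin> {u, v}" "inc_edges E v = {{u, v}, {v, w}}"
proof -
  obtain x y where xy: "inc_edges E v = {x, y}" "x \<noteq> y"
    using assms(2) unfolding deg_def card_2_iff by blast
  have "{u, v} \<in> inc_edges E v" using assms(3) by (simp add: inc_edges_def)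
  then have "{u, v} \<in> {x, y}" unfolding xy(1) .
  then consider "x = {u, v}" | "y = {u, v}" by auto
  then obtain f where f: "f \<noteq> {u, v}" "inc_edges E v = {{u, v}, f}"
  proof cases
    case 1
    then show ?thesis using that[of y] xy by simp
  next
    case 2
    then show ?thesis using that[of x] xy by (simp add: insert_commute)
  qed
  then have "f \<in> E" "v \<in> f" by (auto simp: inc_edges_def)
  then have "card f = 2" using assms(1) unfolding graph_def by blast
  then obtain p q where pq: "f = {p, q}" "p \<noteq> q" unfolding card_2_iff by blast
  with \<open>v \<in> f\<close> consider "v = p" | "v = q" by auto
  then obtain w where w: "w \<noteq> v" "f = {v, w}"
  proof cases
    case 1
    then show ?thesis using that[of q] pq by simp
  next
    case 2
    then show ?thesis using that[of p] pq by (simp add: insert_commute)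
  qed
  moreover have "w \<noteq> u" using f(1) w(2) by (metis insert_commute)
  ultimately show ?thesis using that f(2) by simp
qed

lemma deg_Diff_eq: "\<forall>d\<in>D. t \<notin> d \<Longrightarrow> deg (E - D) t = deg E t"
  unfolding deg_def inc_edges_Diff by (rule arg_cong[of _ _ card]) (auto simp: inc_edges_def)

lemma inc_edges_eq_if_deg_Diff_1:
  "deg (E - D) x = 1 \<Longrightarrow> {x, y} \<in> E - D \<Longrightarrow> inc_edges E x = insert {x, y} (inc_edges E x \<inter> D)"
  using inc_edges_eq_if_deg_1[of "E - D" x y] unfolding inc_edges_Diff by blast

lemma inc_edges_eq_if_deg_Diff_1_outside:
  assumes "\<forall>d\<in>D. s \<notin> d" "deg (E - D) s = 1" "{a, s} \<in> E - D"
  shows "inc_edges E s = {{a, s}}"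
proof -
  have "deg E s = 1" using assms(1,2) deg_Diff_eq by metis
  moreover have "{s, a} \<in> E" using assms(3) by (simp add: insert_commute)
  ultimately have "inc_edges E s = {{s, a}}" by (rule inc_edges_eq_if_deg_1)
  then show ?thesis by (simp add: insert_commute)
qed

lemma isolated_edge_Diff_meets:
  assumes "nice E" "{x, y} \<in> E - D" "x \<noteq> y" "deg (E - D) x = 1" "deg (E - D) y = 1"
  shows "x \<in> \<Union>D \<or> y \<in> \<Union>D"
proof (rule ccontr)
  assume "\<not> (x \<in> \<Union>D \<or> y \<in> \<Union>D)"
  then have "deg E x = 1" "deg E y = 1" using assms(4,5) deg_Diff_eq[of D x E] deg_Diff_eq[of D y E] by auto
  with assms(1-3) show False unfolding nice_def by blast
qed

lemma nice_Diff_if_closed: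
  assumes "nice E" "\<forall>t\<in>\<Union>D. inc_edges E t \<subseteq> D"
  shows "nice (E - D)"
  unfolding nice_def
proof (intro notI, elim exE conjE)
  fix x y assume "{x, y} \<in> E - D" "x \<noteq> y" "deg (E - D) x = 1" "deg (E - D) y = 1"
  with assms show False using isolated_edge_Diff_meets[of E x y D] by (auto simp: inc_edges_def)
qed

lemma obtain_isolated_edge_at:
  assumes "nice E" "\<not> nice (E - D)" "\<forall>t\<in>T. inc_edges E t \<subseteq> D" "\<Union>D \<subseteq> T \<union> A"
  obtains x y where "x \<in> A" "y \<notin> T" "{x, y} \<in> E - D" "x \<noteq> y" "deg (E - D) x = 1" "deg (E - D) y = 1"
proof -
  obtain x y where xy: "{x, y} \<in> E - D" "x \<noteq> y" "deg (E - D) x = 1" "deg (E - D) y = 1"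
    using assms(2) unfolding nice_def by blast
  have not_T: "t \<notin> T" if "t \<in> {x, y}" for t
  proof
    assume "t \<in> T"
    moreover have "{x, y} \<in> inc_edges E t" using xy(1) that by (simp add: inc_edges_def)
    ultimately show False using assms(3) xy(1) by blast
  qed
  have "x \<in> \<Union>D \<or> y \<in> \<Union>D" by (rule isolated_edge_Diff_meets[OF assms(1) xy])
  then consider "x \<in> A" | "y \<in> A" using not_T assms(4) by blast
  then show ?thesis
  proof cases
    case 1
    then show ?thesis using that xy not_T by blast
  next
    case 2
    then show ?thesis using that[of y x] xy not_T by (simp add: insert_commute)
  qed
qed

section \<open>Minimal counterexamples\<close>

locale minimal_non_choosable =
  fixes n :: nat and E :: "nat set set" and b :: nat
  assumes graph: "graph n E" and nice: "nice E" and not_choosable: "\<not> alg_1b_choosable E b"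
    and minimal: "\<And>m E'. m < n \<Longrightarrow> graph m E' \<Longrightarrow> nice E' \<Longrightarrow> alg_1b_choosable E' b"
begin

lemma edge_subset: "e \<in> E \<Longrightarrow> e \<subseteq> {1..n}"
  using graph unfolding graph_def by blast

lemma edge_card: "e \<in> E \<Longrightarrow> card e = 2"
  using graph unfolding graph_def by blast

lemma alg_1b_choosable_remove_vertices:
  assumes "R \<subseteq> {1..n}" "R \<noteq> {}" "nice {e\<in>E. e \<inter> R = {}}"
  shows "alg_1b_choosable {e\<in>E. e \<inter> R = {}} b"
proof -
  define W where "W = {1..n} - R"
  have edges: "\<forall>e\<in>{e\<in>E. e \<inter> R = {}}. e \<subseteq> W \<and> card e = 2"
    using edge_subset edge_card unfolding W_def by blast
  obtain F \<sigma> where F: "graph (card W) F" "strict_mono \<sigma>" "(`) \<sigma> ` F = {e\<in>E. e \<inter> R = {}}"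
  proof (rule ex_graph_relabelling[of W "{e\<in>E. e \<inter> R = {}}"])
    show "finite W" "0 \<notin> W" unfolding W_def by simp_all
  qed (use edges that in blast)+
  have "card R > 0" "card R \<le> n"
    using assms(1,2) card_mono[OF _ assms(1)] finite_subset[OF assms(1)] by auto
  moreover have "card W = n - card R"
    using assms(1) unfolding W_def by (simp add: card_Diff_subset finite_subset)
  ultimately have "card W < n" by linarith
  moreover have "nice F"
    using F(2,3) assms(3) strict_mono_imp_inj_on nice_if_nice_image by metis
  ultimately have "alg_1b_choosable F b" using minimal F(1) by blast
  then show ?thesis
    using alg_1b_choosable_image[OF F(2) finite_if_graph[OF F(1)]] F(1,3) unfolding graph_def by auto
qed

lemma not_coefficient_reducible:
  assumes "R \<subseteq> {1..n}" "R \<noteq> {}" "D = (\<Union>t\<in>R. inc_edges E t)" "nice (E - D)"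
  shows "\<not> coefficient_reducible E D b"
proof
  assume reducible: "coefficient_reducible E D b"
  have "D \<subseteq> E" using assms(3) by (auto simp: inc_edges_def)
  have remove: "E - D = {e\<in>E. e \<inter> R = {}}" using assms(3) by (auto simp: inc_edges_def)
  have "alg_1b_choosable (E - D) b"
    unfolding remove by (rule alg_1b_choosable_remove_vertices[OF assms(1,2)]) (use assms(4) remove in simp)
  then show False
    using alg_1b_choosable_if_coefficient_reducible[OF finite_if_graph[OF graph] \<open>D \<subseteq> E\<close> reducible]
      not_choosable by blast
qed

lemma closed_not_coefficient_reducible:
  assumes "D \<subseteq> E" "D \<noteq> {}" "\<forall>t\<in>\<Union>D. inc_edges E t \<subseteq> D"
  shows "\<not> coefficient_reducible E D b"
proof (rule not_coefficient_reducible)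
  show "\<Union>D \<subseteq> {1..n}" using assms(1) edge_subset by blast
  show "\<Union>D \<noteq> {}" using assms(1,2) edge_card by fastforce
  show "D = (\<Union>t\<in>\<Union>D. inc_edges E t)"
  proof
    show "D \<subseteq> (\<Union>t\<in>\<Union>D. inc_edges E t)"
      using assms(1) edge_card Min_Max_mem_if_card_2 by (fastforce simp: inc_edges_def)
  qed (use assms(3) in blast)
  show "nice (E - D)" by (rule nice_Diff_if_closed[OF nice assms(3)])
qed

lemma no_path_component:
  assumes "3 \<le> b" "distinct [u, v, w, z]"
    and "inc_edges E u = {{u, v}}" "inc_edges E v = {{u, v}, {v, w}}"
    and "inc_edges E w = {{v, w}, {w, z}}" "inc_edges E z = {{w, z}}"
  shows False
proof -
  define D where "D = {{u, v}, {v, w}, {w, z}}"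
  have "D \<subseteq> E" using assms(3-6) by (auto simp: D_def inc_edges_def)
  moreover have "\<Union>D = {u, v, w, z}" by (auto simp: D_def)
  then have "\<forall>t\<in>\<Union>D. inc_edges E t \<subseteq> D" using assms(3-6) by (simp add: D_def)
  moreover have "coefficient_reducible E D b"
    unfolding D_def by (rule coefficient_reducible_mono[OF coefficient_reducible_path_component[OF graph assms(2-6)] assms(1)])
  moreover have "D \<noteq> {}" by (simp add: D_def)
  ultimately show False using closed_not_coefficient_reducible by blast
qed

lemma no_4_cycle_component:
  assumes "3 \<le> b" "distinct [u, v, c, a]"
    and "inc_edges E u = {{u, a}, {u, v}}" "inc_edges E v = {{u, v}, {v, c}}"
    and "inc_edges E a = {{u, a}, {a, c}}" "inc_edges E c = {{v, c}, {a, c}}"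
  shows False
proof -
  define D where "D = {{u, a}, {u, v}, {v, c}, {a, c}}"
  have "D \<subseteq> E" using assms(3-6) by (auto simp: D_def inc_edges_def)
  moreover have "\<Union>D = {u, v, c, a}" by (auto simp: D_def)
  then have "\<forall>t\<in>\<Union>D. inc_edges E t \<subseteq> D" using assms(3-6) by (simp add: D_def)
  moreover have "coefficient_reducible E D b"
    unfolding D_def by (rule coefficient_reducible_mono[OF coefficient_reducible_4_cycle_component[OF graph assms(2-6)] assms(1)])
  moreover have "D \<noteq> {}" by (simp add: D_def)
  ultimately show False using closed_not_coefficient_reducible by blast
qed

lemma no_paw_component:
  assumes "3 \<le> b" "distinct [u, v, a, y]"
    and "inc_edges E u = {{u, a}, {u, v}}" "inc_edges E v = {{u, v}, {v, a}}"
    and "inc_edges E a = {{u, a}, {v, a}, {a, y}}" "inc_edges E y = {{a, y}}"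
  shows False
proof -
  define D where "D = {{u, a}, {u, v}, {v, a}, {a, y}}"
  have "D \<subseteq> E" using assms(3-6) by (auto simp: D_def inc_edges_def)
  moreover have "\<Union>D = {u, v, a, y}" by (auto simp: D_def)
  then have "\<forall>t\<in>\<Union>D. inc_edges E t \<subseteq> D" using assms(3-6) by (simp add: D_def)
  moreover have "coefficient_reducible E D b"
    unfolding D_def by (rule coefficient_reducible_mono[OF coefficient_reducible_paw_component[OF graph assms(2-6)] assms(1)])
  moreover have "D \<noteq> {}" by (simp add: D_def)
  ultimately show False using closed_not_coefficient_reducible by blast
qed

lemma no_edge_deg_1_deg_2:
  assumes "3 \<le> b" "{u, v} \<in> E" "deg E u = 1" "deg E v = 2"
  shows False
proof -
  have "u \<noteq> v" using edge_card[OF assms(2)] by auto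
  obtain w where w: "w \<notin> {u, v}" "inc_edges E v = {{u, v}, {v, w}}"
    using obtain_inc_edges_if_deg_2[OF graph assms(4,2)] .
  have iu: "inc_edges E u = {{u, v}}" using inc_edges_eq_if_deg_1[OF assms(3,2)] .
  have vw: "{v, w} \<in> E" using w(2) by (auto simp: inc_edges_def)
  define D where "D = {{u, v}, {v, w}}"
  have T: "\<forall>t\<in>{u, v}. inc_edges E t \<subseteq> D" using iu w(2) by (simp add: D_def)
  have "D = (\<Union>t\<in>{u, v}. inc_edges E t)" using iu w(2) by (auto simp: D_def)
  moreover have "coefficient_reducible E D b"
    using coefficient_reducible_mono[OF coefficient_reducible_pendant_path[OF graph _ iu w(2)]] assms(1) w(1) \<open>u \<noteq> v\<close>
    unfolding D_def by simp
  ultimately have not_nice: "\<not> nice (E - D)" using not_coefficient_reducible edge_subset[OF assms(2)] by blast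
  have "\<Union>D \<subseteq> {u, v} \<union> {w}" by (auto simp: D_def)
  then obtain x z where z: "x \<in> {w}" "z \<notin> {u, v}" "{x, z} \<in> E - D" "x \<noteq> z"
    "deg (E - D) x = 1" "deg (E - D) z = 1"
    by (rule obtain_isolated_edge_at[OF nice not_nice T])
  then have x: "x = w" by simp
  have "\<forall>d\<in>D. z \<notin> d" using z(1,2,4) by (auto simp: D_def)
  then have iz: "inc_edges E z = {{w, z}}"
    using z(3,6) x by (intro inc_edges_eq_if_deg_Diff_1_outside) auto
  have "inc_edges E w \<inter> D = {{v, w}}" using w(1) vw by (auto simp: D_def inc_edges_def)
  then have iw: "inc_edges E w = {{v, w}, {w, z}}"
    using inc_edges_eq_if_deg_Diff_1[OF z(5,3)] x by (simp add: insert_commute)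
  show False using no_path_component[OF assms(1) _ iu w(2) iw iz] w(1) z(1,2,4) \<open>u \<noteq> v\<close> by simp
qed

lemma attachment_not_isolated:
  assumes "3 \<le> b" "u \<noteq> v" "a \<notin> {u, v}" "c \<notin> {u, v}"
    and iu: "inc_edges E u = {{u, a}, {u, v}}" and iv: "inc_edges E v = {{u, v}, {v, c}}"
    and as: "{a, s} \<in> E - {{u, a}, {u, v}, {v, c}}" "a \<noteq> s"
    and deg: "deg (E - {{u, a}, {u, v}, {v, c}}) a = 1" "deg (E - {{u, a}, {u, v}, {v, c}}) s = 1"
  shows False
proof -
  define D where "D = {{u, a}, {u, v}, {v, c}}"
  have ua: "{u, a} \<in> E" and vc: "{v, c} \<in> E" using iu iv by (auto simp: inc_edges_def)
  have "{a, s} \<in> inc_edges E s" "{a, s} \<notin> D" using as(1) by (simp_all add: inc_edges_def D_def)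
  moreover have "inc_edges E t \<subseteq> D" if "t \<in> {u, v}" for t using that by (auto simp: iu iv D_def)
  ultimately have "s \<noteq> u" "s \<noteq> v" by blast+
  have ia: "inc_edges E a = insert {a, s} (inc_edges E a \<inter> D)"
    using inc_edges_eq_if_deg_Diff_1[OF deg(1) as(1)] unfolding D_def .
  have inc_s: "inc_edges E s = {{a, s}}" if "s \<noteq> c"
    using as deg(2) \<open>s \<noteq> u\<close> \<open>s \<noteq> v\<close> that
    by (intro inc_edges_eq_if_deg_Diff_1_outside[where D = "{{u, a}, {u, v}, {v, c}}"]) auto
  consider (triangle) "a = c" | (square) "a \<noteq> c" "s = c" | (pendant) "a \<noteq> c" "s \<noteq> c" by blast
  then show False
  proof cases
    case triangle
    have "inc_edges E a \<inter> D = {{u, a}, {v, a}}"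
      using assms(3) ua vc triangle by (auto simp: D_def inc_edges_def)
    then have "inc_edges E a = {{u, a}, {v, a}, {a, s}}" using ia by auto
    moreover have "distinct [u, v, a, s]" using assms(2,3) as(2) \<open>s \<noteq> u\<close> \<open>s \<noteq> v\<close> by simp
    moreover have "s \<noteq> c" using triangle as(2) by simp
    ultimately show False using no_paw_component[OF assms(1) _ iu iv[folded triangle]] inc_s by blast
  next
    case square
    have "inc_edges E a \<inter> D = {{u, a}}" using assms(3) ua square(1) by (auto simp: D_def inc_edges_def)
    then have ia': "inc_edges E a = {{u, a}, {a, c}}" using ia square(2) by auto
    have "inc_edges E c \<inter> D = {{v, c}}" using assms(4) vc square(1) by (auto simp: D_def inc_edges_def)
    moreover have "{c, a} \<in> E - D" using as(1) square(2) by (simp add: D_def insert_commute)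
    moreover have "deg (E - D) c = 1" using deg(2) square(2) by (simp add: D_def)
    ultimately have "inc_edges E c = insert {c, a} {{v, c}}" using inc_edges_eq_if_deg_Diff_1[of E D c a] by simp
    then have ic: "inc_edges E c = {{v, c}, {a, c}}" by (simp add: insert_commute)
    have "distinct [u, v, c, a]" using assms(2-4) square(1) by auto
    then show False using no_4_cycle_component[OF assms(1) _ iu iv ia' ic] by blast
  next
    case pendant
    have "inc_edges E a \<inter> D = {{u, a}}" using assms(3) ua pendant(1) by (auto simp: D_def inc_edges_def)
    then have "inc_edges E a = {{u, a}, {a, s}}" using ia by auto
    moreover have "{u, a} \<noteq> {a, s}" using \<open>s \<noteq> u\<close> assms(3) by (auto simp: doubleton_eq_iff)
    ultimately have "deg E a = 2" by (simp add: deg_def)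
    moreover have "deg E s = 1" using inc_s[OF pendant(2)] by (simp add: deg_def)
    moreover have "{s, a} \<in> E" using as(1) by (simp add: insert_commute)
    ultimately show False using no_edge_deg_1_deg_2[OF assms(1)] by blast
  qed
qed

lemma no_edge_deg_2_deg_2:
  assumes "3 \<le> b" "{u, v} \<in> E" "u \<noteq> v" "deg E u = 2" "deg E v = 2"
  shows False
proof -
  have "{v, u} \<in> E" using assms(2) by (simp add: insert_commute)
  then obtain a where a: "a \<notin> {v, u}" "inc_edges E u = {{v, u}, {u, a}}"
    using obtain_inc_edges_if_deg_2[OF graph assms(4)] by blast
  obtain c where c: "c \<notin> {u, v}" "inc_edges E v = {{u, v}, {v, c}}"
    using obtain_inc_edges_if_deg_2[OF graph assms(5,2)] .
  have a': "a \<notin> {u, v}" and c': "c \<notin> {v, u}" using a(1) c(1) by auto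
  have iu: "inc_edges E u = {{u, a}, {u, v}}" using a(2) by (simp add: insert_commute)
  have iv: "inc_edges E v = {{v, c}, {v, u}}" using c(2) by (simp add: insert_commute)
  define D where "D = {{u, a}, {u, v}, {v, c}}"
  have D_sym: "D = {{v, c}, {v, u}, {u, a}}" by (simp add: D_def insert_commute)
  have T: "\<forall>t\<in>{u, v}. inc_edges E t \<subseteq> D" using iu c(2) by (simp add: D_def)
  have "D = (\<Union>t\<in>{u, v}. inc_edges E t)" using iu c(2) by (auto simp: D_def)
  moreover have "coefficient_reducible E D b" unfolding D_def
    by (rule coefficient_reducible_mono[OF coefficient_reducible_degree_2_edge[OF graph assms(3) a' c(1) iu c(2)] assms(1)])
  ultimately have not_nice: "\<not> nice (E - D)" using not_coefficient_reducible edge_subset[OF assms(2)] by blast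
  have "\<Union>D \<subseteq> {u, v} \<union> {a, c}" by (auto simp: D_def)
  then obtain x y where xy: "x \<in> {a, c}" "y \<notin> {u, v}" "{x, y} \<in> E - D" "x \<noteq> y"
    "deg (E - D) x = 1" "deg (E - D) y = 1"
    by (rule obtain_isolated_edge_at[OF nice not_nice T])
  from xy(1) consider "x = a" | "x = c" by blast
  then show False
  proof cases
    case 1
    have "{a, y} \<in> E - {{u, a}, {u, v}, {v, c}}" "a \<noteq> y"
      "deg (E - {{u, a}, {u, v}, {v, c}}) a = 1" "deg (E - {{u, a}, {u, v}, {v, c}}) y = 1"
      using xy(3-6) 1 unfolding D_def by simp_all
    then show False by (rule attachment_not_isolated[OF assms(1,3) a' c(1) iu c(2)])
  next
    case 2
    have "{c, y} \<in> E - {{v, c}, {v, u}, {u, a}}" "c \<noteq> y"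
      "deg (E - {{v, c}, {v, u}, {u, a}}) c = 1" "deg (E - {{v, c}, {v, u}, {u, a}}) y = 1"
      using xy(3-6) 2 unfolding D_sym by simp_all
    then show False by (rule attachment_not_isolated[OF assms(1) assms(3)[symmetric] c' a(1) iv a(2)])
  qed
qed

end

theorem lemma5p3:
  fixes n :: nat and E :: "nat set set"
  assumes "graph n E"
    and "nice E"
    and "\<not> alg_1b_choosable E 5"
    and "\<And>m E'. m < n \<Longrightarrow> graph m E' \<Longrightarrow> nice E' \<Longrightarrow> alg_1b_choosable E' 5"
  shows "\<not> (\<exists>u v. {u, v} \<in> E \<and> deg E u = 1 \<and> deg E v = 2) \<and>
         \<not> (\<exists>u v. {u, v} \<in> E \<and> u \<noteq> v \<and> deg E u = 2 \<and> deg E v = 2)"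
proof -
  interpret minimal_non_choosable n E 5
    using assms by unfold_locales
  have "3 \<le> (5::nat)" by simp
  then show ?thesis using no_edge_deg_1_deg_2 no_edge_deg_2_deg_2 by blast
qed

end
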